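(* For every measurement assemblage $\vec B$ on $\mathcal H$, $$\mathbb{IR}^{\rm JM}(\vec B)=\max_{\rho_B}\mathbb{SR}^{\rm C\text{-}LHS}\big(\rho_B^{1/2}\vec B\rho_B^{1/2}\big),$$ where the maximum is over density operators $\rho_B$ on $\mathcal H$. Moreover, every full-rank density operator $\rho_B$ attains the maximum.
   Context: All Hilbert spaces are finite-dimensional. A measurement assemblage (MA) on $\mathcal H$ is a family $\vec M=\{M_{a|x}\}_{a,x}$, with $x$ ranging over a finite input set and $a$ over a finite outcome set $\mathcal A$, such that for each $x$, $\{M_{a|x}\}_a$ is a POVM. $\vec M$ is jointly measurable, written $\vec M\in\mathbb{JM}$, if there exist a finite POVM $\{G_\lambda\}_\lambda$ and conditional probability distributions $p(a|x,\lambda)$ with $M_{a|x}=\sum_\lambda p(a|x,\lambda)G_\lambda$ for all $a,x$. A state assemblage (SA) on $\mathcal H$ is a family $\vec\sigma=\{\sigma_{a|x}\}_{a,x}$ of positive semidefinite operators such that $\sum_a\sigma_{a|x}=\rho$ is independent of $x$ and $\mathrm{tr}\rho=1$; $\rho$ is called its reduced state. $\vec\sigma$ admits a local hidden state model, written $\vec\sigma\in\mathbb{LHS}$, if $\sigma_{a|x}=\sum_\lambda p(\lambda)p(a|x,\lambda)\rho_\lambda$ for some finite probability distribution $p(\lambda)$, conditional distributions $p(a|x,\lambda)$ and density operators $\rho_\lambda$. JM incompatibility robustness: $\mathbb{IR}^{\rm JM}(\vec M)=\min\{t\ge0:\exists\ \vec D',\vec D\in\mathbb{JM}$ with $(M_{a|x}+tD'_{a|x})/(1+t)=D_{a|x}\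 \forall a,x\}$. Consistent LHS steering robustness of an SA $\vec\sigma$ with reduced state $\rho$: $\mathbb{SR}^{\rm C\text{-}LHS}(\vec\sigma)=\min\{t\ge0:\exists\ \vec\tau',\vec\tau\in\mathbb{LHS}$, both with reduced state $\rho$, with $(\sigma_{a|x}+t\tau'_{a|x})/(1+t)=\tau_{a|x}\ \forall a,x\}$. For a density operator $\rho$ and an MA $\vec B$, $\rho^{1/2}\vec B\rho^{1/2}$ denotes the SA $\{\rho^{1/2}B_{a|x}\rho^{1/2}\}_{a,x}$, with reduced state $\rho$. *)

theory Defs
  imports "HOL-Analysis.Analysis"
begin

text \<open>Operators on the finite-dimensional Hilbert space complex^'n are
  matrices of type complex^'n^'n (dimension CARD('n)).\<close>

definition adj :: "complex^'n^'n \<Rightarrow> complex^'n^'n" where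
  "adj A = (\<chi> i j. cnj (A $ j $ i))"

definition mtrace :: "complex^'n^'n \<Rightarrow> complex" where
  "mtrace A = (\<Sum>i\<in>UNIV. A $ i $ i)"

definition psd :: "complex^'n^'n \<Rightarrow> bool" where
  "psd A \<longleftrightarrow> adj A = A \<and>
     (\<forall>v::complex^'n. 0 \<le> Re (\<Sum>i\<in>UNIV. cnj (v $ i) * (A *v v) $ i))"

definition density_op :: "complex^'n^'n \<Rightarrow> bool" where
  "density_op \<rho> \<longleftrightarrow> psd \<rho> \<and> mtrace \<rho> = 1"

definition msqrt :: "complex^'n^'n \<Rightarrow> complex^'n^'n" where
  "msqrt A = (THE S. psd S \<and> S ** S = A)"

definition is_POVM :: "('o::finite \<Rightarrow> complex^'n^'n) \<Rightarrow> bool" where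
  "is_POVM E \<longleftrightarrow> (\<forall>a. psd (E a)) \<and> (\<Sum>a\<in>UNIV. E a) = mat 1"

text \<open>Measurement assemblage: M a x = M_{a|x}.\<close>
definition is_MA :: "('o::finite \<Rightarrow> 'x::finite \<Rightarrow> complex^'n^'n) \<Rightarrow> bool" where
  "is_MA M \<longleftrightarrow> (\<forall>x. is_POVM (\<lambda>a. M a x))"

definition cond_prob :: "('o::finite \<Rightarrow> 'x \<Rightarrow> nat \<Rightarrow> real) \<Rightarrow> nat \<Rightarrow> bool" where
  "cond_prob p m \<longleftrightarrow> (\<forall>a x l. l < m \<longrightarrow> 0 \<le> p a x l) \<and>
                      (\<forall>x l. l < m \<longrightarrow> (\<Sum>a\<in>UNIV. p a x l) = 1)"

definition JM :: "('o::finite \<Rightarrow> 'x::finite \<Rightarrow> complex^'n^'n) \<Rightarrow> bool" where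
  "JM M \<longleftrightarrow> (\<exists>(m::nat) (G::nat \<Rightarrow> complex^'n^'n) p.
      (\<forall>l<m. psd (G l)) \<and> (\<Sum>l<m. G l) = mat 1 \<and> cond_prob p m \<and>
      (\<forall>a x. M a x = (\<Sum>l<m. p a x l *\<^sub>R G l)))"

definition is_SA :: "('o::finite \<Rightarrow> 'x::finite \<Rightarrow> complex^'n^'n) \<Rightarrow> complex^'n^'n \<Rightarrow> bool" where
  "is_SA \<sigma> \<rho> \<longleftrightarrow> (\<forall>a x. psd (\<sigma> a x)) \<and> (\<forall>x. (\<Sum>a\<in>UNIV. \<sigma> a x) = \<rho>) \<and> mtrace \<rho> = 1"

definition LHS :: "('o::finite \<Rightarrow> 'x::finite \<Rightarrow> complex^'n^'n) \<Rightarrow> bool" where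
  "LHS \<sigma> \<longleftrightarrow> (\<exists>(m::nat) (q::nat \<Rightarrow> real) p (R::nat \<Rightarrow> complex^'n^'n).
      (\<forall>l<m. 0 \<le> q l) \<and> (\<Sum>l<m. q l) = 1 \<and> cond_prob p m \<and>
      (\<forall>l<m. density_op (R l)) \<and>
      (\<forall>a x. \<sigma> a x = (\<Sum>l<m. (q l * p a x l) *\<^sub>R R l)))"

text \<open>JM incompatibility robustness (the minimum, written as an infimum).\<close>
definition IR_JM :: "('o::finite \<Rightarrow> 'x::finite \<Rightarrow> complex^'n^'n) \<Rightarrow> real" where
  "IR_JM M = Inf {t. 0 \<le> t \<and> (\<exists>D' D. JM D' \<and> JM D \<and>
      (\<forall>a x. (1 / (1 + t)) *\<^sub>R (M a x + t *\<^sub>R D' a x) = D a x))}"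

definition SR_CLHS :: "('o::finite \<Rightarrow> 'x::finite \<Rightarrow> complex^'n^'n) \<Rightarrow> real" where
  "SR_CLHS \<sigma> = Inf {t. 0 \<le> t \<and> (\<exists>\<tau>' \<tau>. LHS \<tau>' \<and> LHS \<tau> \<and>
      (\<forall>x. (\<Sum>a\<in>UNIV. \<tau>' a x) = (\<Sum>a\<in>UNIV. \<sigma> a x)) \<and>
      (\<forall>x. (\<Sum>a\<in>UNIV. \<tau> a x) = (\<Sum>a\<in>UNIV. \<sigma> a x)) \<and>
      (\<forall>a x. (1 / (1 + t)) *\<^sub>R (\<sigma> a x + t *\<^sub>R \<tau>' a x) = \<tau> a x))}"

definition sandwich :: "complex^'n^'n \<Rightarrow> ('o \<Rightarrow> 'x \<Rightarrow> complex^'n^'n) \<Rightarrow> ('o \<Rightarrow> 'x \<Rightarrow> complex^'n^'n)" where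
  "sandwich \<rho> B = (\<lambda>a x. msqrt \<rho> ** B a x ** msqrt \<rho>)"

end

theory Submission
  imports Defs
begin

text \<open>
  If \<open>B = (1 + t) D - t D'\<close> with \<open>D\<close> and \<open>D'\<close> jointly measurable, conjugating by
  \<open>\<rho>^(1/2)\<close> turns each effect \<open>G\<^sub>\<lambda>\<close> of a joint measurement into an unnormalised hidden state
  \<open>\<rho>^(1/2) G\<^sub>\<lambda> \<rho>^(1/2)\<close>, whose trace is its weight, and all reduced states become \<open>\<rho>\<close>. Hence
  every \<open>t\<close> feasible for the incompatibility robustness of \<open>B\<close> is feasible for the consistent
  steering robustness of \<open>\<rho>^(1/2) B \<rho>^(1/2)\<close>, which gives \<open>\<le>\<close>. If \<open>\<rho>\<close> has full rank,
  conjugating by \<open>\<rho>^(-1/2)\<close> turns a local-hidden-state assemblage with reduced state \<open>\<rho>\<close>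
  back into a joint measurement, so the two feasible sets coincide; the maximally mixed state
  then attains the maximum.

  The square root \<open>\<rho>^(1/2)\<close> exists and is unique by the spectral theorem for Hermitian
  matrices, which is proved by maximising the quadratic form on the unit sphere of the
  orthogonal complement of a maximal orthonormal family of eigenvectors.
\<close>

section \<open>Sesquilinear calculus on \<open>complex^'n\<close>\<close>

definition cinner :: "complex^'n \<Rightarrow> complex^'n \<Rightarrow> complex" where
  "cinner u w = (\<Sum>i\<in>UNIV. cnj (u$i) * w$i)"

definition qform :: "complex^'n^'n \<Rightarrow> complex^'n \<Rightarrow> complex" where
  "qform A v = cinner v (A *v v)"

lemma psd_iff_qform: "psd A \<longleftrightarrow> adj A = A \<and> (\<forall>v. 0 \<le> Re (qform A v))"
  by (simp add: psd_def qform_def cinner_def)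

lemma adj_adj [simp]: "adj (adj A) = A"
  by (simp add: adj_def vec_eq_iff)

lemma adj_mult: "adj (A ** B) = adj B ** adj A"
  by (simp add: adj_def matrix_matrix_mult_def vec_eq_iff mult.commute)

lemma adj_add: "adj (A + B) = adj A + adj B"
  by (simp add: adj_def vec_eq_iff)

lemma adj_diff: "adj (A - B) = adj A - adj B"
  by (simp add: adj_def vec_eq_iff)

lemma adj_scaleR: "adj (c *\<^sub>R A) = c *\<^sub>R adj A"
  by (simp add: adj_def vec_eq_iff)

lemma adj_mat_1 [simp]: "adj (mat 1) = mat 1"
  by (simp add: adj_def vec_eq_iff mat_def)

lemma adj_zero [simp]: "adj 0 = 0"
  by (simp add: adj_def vec_eq_iff)

lemma scaleR_complex: "r *\<^sub>R (z::complex) = of_real r * z"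
  by (simp add: scaleR_conv_of_real)

lemma matrix_vector_mult_scale: "(A::complex^'n^'m) *v (c *s v) = c *s (A *v v)"
  by (simp add: matrix_vector_mult_def vec_eq_iff sum_distrib_left mult.left_commute)

lemma scaleR_matrix_vector_mult: "(c *\<^sub>R (A::complex^'n^'n)) *v x = of_real c *s (A *v x)"
  by (simp add: matrix_vector_mult_def vec_eq_iff sum_distrib_left scaleR_complex mult.assoc)

lemma scaleR_eq_scale_of_real: "c *\<^sub>R (w::complex^'n) = of_real c *s w"
  by (simp add: vec_eq_iff scaleR_complex)

lemma sum_matrix_vector_mult: "(sum f S) *v (x::complex^'n) = (\<Sum>l\<in>S. f l *v x)"
  by (induction S rule: infinite_finite_induct) (auto simp: matrix_vector_mult_add_rdistrib)

lemma matrix_vector_mult_sum: "(A::complex^'n^'n) *v (sum f S) = (\<Sum>l\<in>S. A *v f l)"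
  by (induction S rule: infinite_finite_induct) (auto simp: matrix_vector_right_distrib)

lemma matrix_vector_mult_axis: "((A::complex^'n^'n) *v axis i 1) $ k = A $ k $ i"
  by (simp add: matrix_vector_mult_def axis_def if_distrib if_distribR cong: if_cong)

lemma cinner_adj: "cinner u (A *v w) = cinner (adj A *v u) w"
proof -
  have "cinner u (A *v w) = (\<Sum>i\<in>UNIV. \<Sum>j\<in>UNIV. cnj (u$i) * A$i$j * w$j)"
    by (simp add: cinner_def matrix_vector_mult_def sum_distrib_left mult.assoc)
  also have "\<dots> = (\<Sum>j\<in>UNIV. \<Sum>i\<in>UNIV. cnj (u$i) * A$i$j * w$j)"
    by (rule sum.swap)
  also have "\<dots> = cinner (adj A *v u) w"
    by (simp add: cinner_def matrix_vector_mult_def adj_def sum_distrib_right sum_distrib_left mult_ac)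
  finally show ?thesis .
qed

lemma cinner_add_right: "cinner u (v + w) = cinner u v + cinner u w"
  by (simp add: cinner_def algebra_simps sum.distrib)

lemma cinner_add_left: "cinner (u + v) w = cinner u w + cinner v w"
  by (simp add: cinner_def algebra_simps sum.distrib)

lemma cinner_diff_right: "cinner u (v - w) = cinner u v - cinner u w"
  by (simp add: cinner_def algebra_simps sum_subtractf)

lemma cinner_scale_right: "cinner u (c *s w) = c * cinner u w"
  by (simp add: cinner_def sum_distrib_left mult_ac)

lemma cinner_scale_left: "cinner (c *s u) w = cnj c * cinner u w"
  by (simp add: cinner_def sum_distrib_left mult_ac)

lemma cinner_zero_right [simp]: "cinner u 0 = 0"
  by (simp add: cinner_def)

lemma cinner_sum_right: "cinner u (sum f S) = (\<Sum>l\<in>S. cinner u (f l))"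
  by (induction S rule: infinite_finite_induct) (auto simp: cinner_add_right)

lemma cinner_commute: "cinner w u = cnj (cinner u w)"
  by (simp add: cinner_def mult.commute)


lemma cinner_self: "cinner v v = of_real ((norm v)\<^sup>2)"
proof -
  have "cinner v v = (\<Sum>i\<in>UNIV. of_real ((cmod (v$i))\<^sup>2))"
    unfolding cinner_def by (intro sum.cong refl) (metis complex_norm_square mult.commute)
  also have "\<dots> = of_real ((norm v)\<^sup>2)"
    by (simp add: norm_vec_def L2_set_def sum_nonneg)
  finally show ?thesis .
qed

lemma cinner_self_eq_0 [simp]: "cinner v v = 0 \<longleftrightarrow> v = 0"
  by (simp add: cinner_self)

lemma cinner_hermitian: "adj M = M \<Longrightarrow> cinner v (M *v u) = cnj (cinner u (M *v v))"
  by (metis cinner_adj cinner_commute)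

lemma qform_hermitian_real: "adj A = A \<Longrightarrow> qform A v = of_real (Re (qform A v))"
  by (metis cinner_hermitian qform_def Reals_cnj_iff of_real_Re)

lemma qform_add: "qform (A + B) v = qform A v + qform B v"
  by (simp add: qform_def matrix_vector_mult_add_rdistrib cinner_add_right)

lemma qform_diff: "qform (A - B) v = qform A v - qform B v"
  by (simp add: qform_def matrix_vector_mult_diff_rdistrib cinner_diff_right)

lemma qform_scaleR: "qform (c *\<^sub>R A) v = of_real c * qform A v"
  by (simp add: qform_def scaleR_matrix_vector_mult cinner_scale_right)

lemma qform_mat_1: "qform (mat 1) v = cinner v v"
  by (simp add: qform_def)

lemma qform_scaleR_vector: "qform A (c *\<^sub>R v) = of_real (c\<^sup>2) * qform A v"
  by (simp add: qform_def scaleR_eq_scale_of_real matrix_vector_mult_scale cinner_scale_left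
      cinner_scale_right power2_eq_square)

lemma qform_add_scale:
  "qform M (v + t *s u) =
     qform M v + t * cinner v (M *v u) + cnj t * cinner u (M *v v) + (cnj t * t) * qform M u"
  by (simp add: qform_def matrix_vector_right_distrib matrix_vector_mult_scale cinner_add_left
      cinner_add_right cinner_scale_left cinner_scale_right algebra_simps)

text \<open>A Hermitian form that is nonnegative on the line \<open>v + t u\<close> and vanishes at \<open>v\<close> has a
  critical point there, so its first-order term in \<open>t\<close> must vanish.\<close>

lemma hermitian_qform_min_orthogonal:
  assumes herm: "adj M = M" and v0: "Re (qform M v) = 0" and b: "0 \<le> Re (qform M u)"
    and pos: "\<And>t. 0 \<le> Re (qform M (v + t *s u))"
  shows "cinner u (M *v v) = 0"
proof -
  define a where "a = cinner u (M *v v)"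
  define b where "b = Re (qform M u)"
  define r where "r = 1 / (b + 1)"
  have rp: "r > 0" and rb: "r * b < 1"
    using b by (simp_all add: r_def b_def field_simps)
  define t where "t = - (of_real r * a)"
  have aa: "of_real (cmod a) * of_real (cmod a) = a * cnj a"
    by (metis complex_norm_square of_real_mult power2_eq_square)
  have "0 \<le> Re (qform M (v + t *s u))"
    by (rule pos)
  also have "qform M (v + t *s u) = qform M v + t * cnj a + cnj t * a + (cnj t * t) * of_real b"
    using qform_hermitian_real[OF herm, of u] cinner_hermitian[OF herm, of v u]
    by (simp add: qform_add_scale a_def b_def)
  also have "\<dots> = qform M v - 2 * of_real (r * (cmod a)\<^sup>2) + of_real (r\<^sup>2 * (cmod a)\<^sup>2 * b)"
    unfolding t_def by (simp add: power2_eq_square aa)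
  finally have "0 \<le> (cmod a)\<^sup>2 * (r * (r * b - 2))"
    using v0 by (simp add: algebra_simps power2_eq_square)
  moreover have "r * (r * b - 2) < 0"
    using rp rb by (simp add: mult_pos_neg)
  ultimately have "(cmod a)\<^sup>2 \<le> 0"
    by (meson mult_pos_neg not_le)
  then show ?thesis
    by (simp add: a_def)
qed

lemma psd_add: "psd A \<Longrightarrow> psd B \<Longrightarrow> psd (A + B)"
  by (simp add: psd_iff_qform adj_add qform_add)

lemma psd_scaleR: "psd A \<Longrightarrow> 0 \<le> c \<Longrightarrow> psd (c *\<^sub>R A)"
  by (simp add: psd_iff_qform adj_scaleR qform_scaleR)

lemma psd_zero: "psd 0"
  by (simp add: psd_iff_qform qform_def)

lemma psd_sum: "(\<And>l. l \<in> S \<Longrightarrow> psd (f l)) \<Longrightarrow> psd (sum f S)"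
  by (induction S rule: infinite_finite_induct) (auto simp: psd_add psd_zero)

lemma psd_mat_1: "psd (mat 1)"
  by (simp add: psd_iff_qform qform_mat_1 cinner_self)

lemma psd_congruence:
  assumes "psd G" shows "psd (adj X ** G ** X)"
proof -
  have "adj G = G"
    using assms by (simp add: psd_iff_qform)
  then have "adj (adj X ** G ** X) = adj X ** G ** X"
    by (simp add: adj_mult matrix_mul_assoc)
  moreover have "qform (adj X ** G ** X) v = qform G (X *v v)" for v
    by (simp add: qform_def cinner_adj flip: matrix_vector_mul_assoc)
  ultimately show ?thesis
    using assms by (simp add: psd_iff_qform)
qed

lemma psd_kernel: "psd A \<Longrightarrow> Re (qform A v) = 0 \<Longrightarrow> A *v v = 0"
  using hermitian_qform_min_orthogonal[of A v "A *v v"] by (auto simp: psd_iff_qform)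

lemma psd_diagonal:
  assumes "psd A" shows "A $ i $ i = of_real (Re (A $ i $ i)) \<and> 0 \<le> Re (A $ i $ i)"
proof -
  have "A $ i $ i = qform A (axis i 1)"
    by (simp add: qform_def cinner_def axis_def if_distrib if_distribR
        flip: matrix_vector_mult_axis cong: if_cong)
  then show ?thesis
    using assms qform_hermitian_real[of A "axis i 1"] by (auto simp: psd_iff_qform)
qed

lemma mtrace_add: "mtrace (A + B) = mtrace A + mtrace B"
  by (simp add: mtrace_def sum.distrib)

lemma mtrace_scaleR: "mtrace (c *\<^sub>R A) = of_real c * mtrace A"
  by (simp add: mtrace_def sum_distrib_left scaleR_complex)

lemma mtrace_zero [simp]: "mtrace 0 = 0"
  by (simp add: mtrace_def)

lemma mtrace_sum: "mtrace (sum f S) = (\<Sum>l\<in>S. mtrace (f l))"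
  by (induction S rule: infinite_finite_induct) (auto simp: mtrace_add)

lemma mtrace_mat_1: "mtrace (mat 1 :: complex^'n^'n) = of_nat CARD('n)"
  by (simp add: mtrace_def mat_def)

lemma psd_mtrace: "psd A \<Longrightarrow> mtrace A = of_real (Re (mtrace A)) \<and> 0 \<le> Re (mtrace A)"
  using psd_diagonal[of A] unfolding mtrace_def
  by (auto simp: Re_sum intro!: sum_nonneg complex_eqI)

lemma psd_mtrace_eq_0: assumes "psd A" "mtrace A = 0" shows "A = 0"
proof -
  have "(\<Sum>i\<in>UNIV. Re (A $ i $ i)) = 0"
    using assms(2) by (simp add: mtrace_def flip: Re_sum)
  then have "Re (qform A (axis i 1)) = 0" for i
    using psd_diagonal[OF assms(1)] sum_nonneg_eq_0_iff[of UNIV "\<lambda>i. Re (A $ i $ i)"]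
    by (simp add: qform_def cinner_def axis_def if_distrib if_distribR
        flip: matrix_vector_mult_axis cong: if_cong)
  then have "A *v axis i 1 = 0" for i
    using psd_kernel[OF assms(1)] by blast
  then show ?thesis
    by (simp add: vec_eq_iff flip: matrix_vector_mult_axis)
qed

section \<open>The spectral theorem for Hermitian matrices\<close>

definition eigensystem :: "complex^'n^'n \<Rightarrow> (complex^'n) set \<Rightarrow> (complex^'n \<Rightarrow> real) \<Rightarrow> bool" where
  "eigensystem A E lam \<longleftrightarrow> finite E \<and>
     (\<forall>e\<in>E. cinner e e = 1 \<and> A *v e = of_real (lam e) *s e) \<and>
     (\<forall>e\<in>E. \<forall>f\<in>E. e \<noteq> f \<longrightarrow> cinner e f = 0)"

lemma eigensystem_card_le:
  fixes E :: "(complex^'n) set"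
  assumes "eigensystem A E lam" shows "card E \<le> DIM(complex^'n)"
proof -
  have "e \<bullet> f = Re (cinner e f)" for e f :: "complex^'n"
    by (simp add: inner_vec_def cinner_def inner_complex_def)
  then have "pairwise orthogonal E"
    using assms by (auto simp: pairwise_def orthogonal_def eigensystem_def)
  moreover have "0 \<notin> E"
    using assms by (auto simp: eigensystem_def)
  ultimately have "independent E"
    by (rule pairwise_orthogonal_independent)
  then show ?thesis
    by (rule independent_bound[THEN conjunct2])
qed

lemma eigensystem_coefficient:
  assumes "eigensystem A E lam" "e \<in> E"
  shows "cinner e (\<Sum>f\<in>E. c f *s f) = c e"
proof -
  have "cinner e (\<Sum>f\<in>E. c f *s f) = (\<Sum>f\<in>E. c f * cinner e f)"
    by (simp add: cinner_sum_right cinner_scale_right)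
  also have "\<dots> = c e * cinner e e + (\<Sum>f\<in>E-{e}. c f * cinner e f)"
    using assms by (simp add: eigensystem_def sum.remove)
  also have "(\<Sum>f\<in>E-{e}. c f * cinner e f) = 0"
    using assms by (intro sum.neutral) (auto simp: eigensystem_def)
  finally show ?thesis
    using assms by (simp add: eigensystem_def)
qed

lemma qform_attains_max_on_cone:
  fixes A :: "complex^'n^'n"
  assumes "closed W" and scale: "\<And>w c. w \<in> W \<Longrightarrow> c *\<^sub>R w \<in> W" and "r \<in> W" "r \<noteq> 0"
  shows "\<exists>v\<in>W. norm v = 1 \<and> (\<forall>w\<in>W. Re (qform A w) \<le> Re (qform A v) * (norm w)\<^sup>2)"
proof -
  define K where "K = W \<inter> sphere 0 1"
  have "compact K"
    unfolding K_def using \<open>closed W\<close> by (rule closed_Int_compact[OF _ compact_sphere])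
  moreover have "(1 / norm r) *\<^sub>R r \<in> K"
    using assms by (auto simp: K_def)
  moreover have "continuous_on K (\<lambda>w. Re (qform A w))"
    unfolding qform_def cinner_def matrix_vector_mult_def by (intro continuous_intros)
  ultimately obtain v where v: "v \<in> K" and vmax: "\<And>w. w \<in> K \<Longrightarrow> Re (qform A w) \<le> Re (qform A v)"
    using continuous_attains_sup[of K "\<lambda>w. Re (qform A w)"] by blast
  have "Re (qform A w) \<le> Re (qform A v) * (norm w)\<^sup>2" if "w \<in> W" for w
  proof (cases "w = 0")
    case True then show ?thesis by (simp add: qform_def)
  next
    case False
    then have "Re (qform A ((1 / norm w) *\<^sub>R w)) \<le> Re (qform A v)"
      using that scale by (intro vmax) (auto simp: K_def)
    then show ?thesis
      using False by (simp add: qform_scaleR_vector power_divide divide_le_eq)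
  qed
  then show ?thesis
    using v by (auto simp: K_def)
qed

text \<open>If \<open>v\<close> maximises the Rayleigh quotient on an \<open>A\<close>-invariant subspace, then \<open>\<mu> I - A\<close>
  is positive semidefinite there and vanishes in the direction \<open>v\<close>, so \<open>v\<close> is an eigenvector.\<close>

lemma hermitian_qform_max_eigenvector:
  fixes A :: "complex^'n^'n"
  assumes herm: "adj A = A"
    and subspace: "\<And>u w t. u \<in> W \<Longrightarrow> w \<in> W \<Longrightarrow> u + t *s w \<in> W"
    and "v \<in> W" "A *v v \<in> W" and unit: "cinner v v = 1"
    and max: "\<forall>w\<in>W. Re (qform A w) \<le> Re (qform A v) * (norm w)\<^sup>2"
  shows "A *v v = of_real (Re (qform A v)) *s v"
proof -
  define \<mu> where "\<mu> = Re (qform A v)"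
  define M where "M = \<mu> *\<^sub>R mat 1 - A"
  have qform_M: "qform M w = of_real \<mu> * cinner w w - qform A w" for w
    by (simp add: M_def qform_diff qform_scaleR qform_mat_1)
  have "adj M = M"
    by (simp add: M_def adj_diff adj_scaleR herm)
  moreover have "Re (qform M v) = 0"
    by (simp add: qform_M unit \<mu>_def)
  moreover have M_nonneg: "0 \<le> Re (qform M w)" if "w \<in> W" for w
    using max that by (simp add: qform_M cinner_self \<mu>_def)
  ultimately have "cinner u (M *v v) = 0" if "u \<in> W" for u
    using subspace \<open>v \<in> W\<close> that by (intro hermitian_qform_min_orthogonal M_nonneg) auto
  moreover have "M *v v \<in> W"
  proof -
    have "v + (-1) *s v \<in> W"
      using subspace \<open>v \<in> W\<close> by blast
    then have "- (A *v v) \<in> W"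
      using subspace[OF _ \<open>A *v v \<in> W\<close>, of 0 "-1"] by simp
    then have "- (A *v v) + of_real \<mu> *s v \<in> W"
      using subspace \<open>v \<in> W\<close> by blast
    moreover have "M *v v = - (A *v v) + of_real \<mu> *s v"
      by (simp add: M_def matrix_vector_mult_diff_rdistrib scaleR_matrix_vector_mult)
    ultimately show ?thesis
      by simp
  qed
  ultimately have "M *v v = 0"
    by (metis cinner_self_eq_0)
  then show ?thesis
    by (simp add: M_def matrix_vector_mult_diff_rdistrib scaleR_matrix_vector_mult \<mu>_def)
qed

definition orth_compl :: "(complex^'n) set \<Rightarrow> (complex^'n) set" where
  "orth_compl E = {w. \<forall>e\<in>E. cinner e w = 0}"

lemma orth_compl_add_scale: "u \<in> orth_compl E \<Longrightarrow> w \<in> orth_compl E \<Longrightarrow> u + t *s w \<in> orth_compl E"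
  by (simp add: orth_compl_def cinner_add_right cinner_scale_right)

lemma closed_orth_compl: "closed (orth_compl E)"
proof -
  have "closed {w. cinner e w = 0}" for e :: "complex^'n"
    unfolding cinner_def by (intro closed_Collect_eq continuous_intros)
  moreover have "orth_compl E = (\<Inter>e\<in>E. {w. cinner e w = 0})"
    by (auto simp: orth_compl_def)
  ultimately show ?thesis
    by auto
qed

lemma hermitian_eigensystem_extend:
  fixes A :: "complex^'n^'n"
  assumes herm: "adj A = A" and E: "eigensystem A E lam"
    and incomplete: "x \<noteq> (\<Sum>e\<in>E. cinner e x *s e)"
  shows "\<exists>v \<mu>. v \<notin> E \<and> eigensystem A (insert v E) (lam(v := \<mu>))"
proof -
  define W where "W = orth_compl E"
  have subspace: "u + t *s w \<in> W" if "u \<in> W" "w \<in> W" for u w t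
    using that by (simp add: W_def orth_compl_add_scale)
  have "closed W"
    by (simp add: W_def closed_orth_compl)
  moreover have "c *\<^sub>R w \<in> W" if "w \<in> W" for w c
    using subspace[of 0 w "of_real c"] that by (simp add: W_def orth_compl_def scaleR_eq_scale_of_real)
  moreover have "x - (\<Sum>e\<in>E. cinner e x *s e) \<in> W"
    using eigensystem_coefficient[OF E] by (simp add: W_def orth_compl_def cinner_diff_right)
  moreover have "x - (\<Sum>e\<in>E. cinner e x *s e) \<noteq> 0"
    using incomplete by simp
  ultimately obtain v where "v \<in> W" "norm v = 1"
    and max: "\<forall>w\<in>W. Re (qform A w) \<le> Re (qform A v) * (norm w)\<^sup>2"
    using qform_attains_max_on_cone[of W] by blast
  then have unit: "cinner v v = 1"
    by (simp add: cinner_self)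
  have "A *v v \<in> W"
  proof -
    have "cinner e (A *v v) = cinner (A *v e) v" for e
      using cinner_adj[of e A v] herm by simp
    then show ?thesis
      using E \<open>v \<in> W\<close> by (auto simp: W_def orth_compl_def eigensystem_def cinner_scale_left)
  qed
  then have "A *v v = of_real (Re (qform A v)) *s v"
    using hermitian_qform_max_eigenvector[OF herm subspace \<open>v \<in> W\<close> _ unit max] by blast
  moreover have "v \<notin> E"
    using \<open>v \<in> W\<close> unit by (auto simp: W_def orth_compl_def)
  moreover have "cinner v f = 0" if "f \<in> E" for f
    using \<open>v \<in> W\<close> that cinner_commute[of v f] by (simp add: W_def orth_compl_def)
  ultimately have "eigensystem A (insert v E) (lam(v := Re (qform A v)))"
    using E \<open>v \<in> W\<close> unit by (auto simp: eigensystem_def W_def orth_compl_def)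
  then show ?thesis
    using \<open>v \<notin> E\<close> by blast
qed

text \<open>An eigensystem of maximal cardinality (bounded by the dimension) cannot be extended,
  hence is complete.\<close>

theorem hermitian_spectral:
  fixes A :: "complex^'n^'n"
  assumes herm: "adj A = A"
  shows "\<exists>E lam. eigensystem A E lam \<and> (\<forall>x. x = (\<Sum>e\<in>E. cinner e x *s e))"
proof -
  define C where "C = {card E | E. \<exists>lam. eigensystem A E lam}"
  have "finite C"
    by (rule finite_subset[of _ "{..DIM(complex^'n)}"]) (auto simp: C_def dest!: eigensystem_card_le)
  moreover have "card {} \<in> C"
    unfolding C_def by (intro CollectI exI[of _ "{}"]) (auto simp: eigensystem_def)
  ultimately have "Max C \<in> C"
    by (intro Max_in) auto
  then obtain E lam where cE: "card E = Max C" and E: "eigensystem A E lam"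
    by (auto simp: C_def)
  have "x = (\<Sum>e\<in>E. cinner e x *s e)" for x
  proof (rule ccontr)
    assume "x \<noteq> (\<Sum>e\<in>E. cinner e x *s e)"
    then obtain v \<mu> where "v \<notin> E" and E': "eigensystem A (insert v E) (lam(v := \<mu>))"
      using hermitian_eigensystem_extend[OF herm E] by blast
    then have "card (insert v E) \<le> Max C"
      using \<open>finite C\<close> by (intro Max_ge) (auto simp: C_def)
    then show False
      using cE \<open>v \<notin> E\<close> E by (simp add: eigensystem_def)
  qed
  then show ?thesis
    using E by blast
qed

section \<open>Positive square roots\<close>

definition outer :: "complex^'n \<Rightarrow> complex^'n \<Rightarrow> complex^'n^'n" where
  "outer u w = (\<chi> i j. u$i * cnj (w$j))"

lemma outer_matrix_vector_mult: "outer u w *v x = cinner w x *s u"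
  by (simp add: outer_def matrix_vector_mult_def cinner_def vec_eq_iff sum_distrib_left mult_ac)

lemma adj_outer_self: "adj (outer u u) = outer u u"
  by (simp add: outer_def adj_def vec_eq_iff mult.commute)

lemma matrix_vector_mult_expansion:
  assumes "\<forall>x. x = (\<Sum>e\<in>E. cinner e x *s e)"
  shows "(A::complex^'n^'n) *v x = (\<Sum>e\<in>E. cinner e x *s (A *v e))"
proof -
  have "A *v x = A *v (\<Sum>e\<in>E. cinner e x *s e)"
    by (rule arg_cong[OF assms[rule_format]])
  then show ?thesis
    by (simp add: matrix_vector_mult_sum matrix_vector_mult_scale)
qed

lemma psd_outer_sum:
  fixes E :: "(complex^'n) set"
  assumes "\<And>e. e \<in> E \<Longrightarrow> 0 \<le> s e"
  shows "psd (\<Sum>e\<in>E. s e *\<^sub>R outer e e)"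
proof -
  have "qform (outer e e) x = cinner e x * cnj (cinner e x)" for e x :: "complex^'n"
    by (simp add: qform_def outer_matrix_vector_mult cinner_scale_right cinner_commute[of x e])
  then have "qform (outer e e) x = of_real ((cmod (cinner e x))\<^sup>2)" for e x :: "complex^'n"
    by (simp only: complex_norm_square)
  then have "0 \<le> Re (qform (outer e e) x)" for e x :: "complex^'n"
    by (metis Re_complex_of_real zero_le_power2)
  then have "psd (outer e e)" for e :: "complex^'n"
    by (simp add: psd_iff_qform adj_outer_self)
  then show ?thesis
    using assms by (intro psd_sum psd_scaleR) auto
qed

lemma psd_sqrt_exists:
  assumes "psd A" shows "\<exists>S. psd S \<and> S ** S = A"
proof -
  have "adj A = A"
    using assms by (simp add: psd_iff_qform)
  then obtain E lam where E: "eigensystem A E lam" and complete: "\<forall>x. x = (\<Sum>e\<in>E. cinner e x *s e)"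
    using hermitian_spectral by blast
  have lam_nonneg: "0 \<le> lam e" if "e \<in> E" for e
  proof -
    have "qform A e = of_real (lam e)"
      using E that by (simp add: eigensystem_def qform_def cinner_scale_right)
    moreover have "0 \<le> Re (qform A e)"
      using assms by (simp add: psd_iff_qform)
    ultimately show ?thesis
      by simp
  qed
  define S where "S = (\<Sum>e\<in>E. sqrt (lam e) *\<^sub>R outer e e)"
  have S_apply: "S *v x = (\<Sum>e\<in>E. (of_real (sqrt (lam e)) * cinner e x) *s e)" for x
    unfolding S_def sum_matrix_vector_mult scaleR_matrix_vector_mult outer_matrix_vector_mult
      vector_smult_assoc ..
  have "S *v (S *v x) = A *v x" for x
  proof -
    have "S *v (S *v x) = (\<Sum>e\<in>E. (of_real (sqrt (lam e)) * cinner e (S *v x)) *s e)"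
      by (rule S_apply)
    also have "\<dots> = (\<Sum>e\<in>E. cinner e x *s (A *v e))"
    proof (rule sum.cong[OF refl])
      fix e assume e: "e \<in> E"
      have "cinner e (S *v x) = of_real (sqrt (lam e)) * cinner e x"
        unfolding S_apply by (rule eigensystem_coefficient[OF E e])
      moreover have "of_real (sqrt (lam e)) * of_real (sqrt (lam e)) = (of_real (lam e) :: complex)"
        using lam_nonneg[OF e] by (simp flip: of_real_mult)
      ultimately show "(of_real (sqrt (lam e)) * cinner e (S *v x)) *s e = cinner e x *s (A *v e)"
        using E e by (simp add: eigensystem_def vector_smult_assoc ac_simps)
    qed
    also have "\<dots> = A *v x"
      by (rule matrix_vector_mult_expansion[OF complete, symmetric])
    finally show ?thesis .
  qed
  then have "S ** S = A"
    by (simp add: matrix_eq flip: matrix_vector_mul_assoc)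
  moreover have "psd S"
    unfolding S_def using lam_nonneg by (intro psd_outer_sum) simp
  ultimately show ?thesis
    by blast
qed

text \<open>The eigenvalue \<open>l\<close> satisfies \<open>l (\<langle>e, S e\<rangle> + \<langle>e, T e\<rangle>) = \<langle>e, (S\<^sup>2 - T\<^sup>2) e\<rangle> = 0\<close>, so either
  \<open>l = 0\<close> or both forms vanish at \<open>e\<close>, which puts \<open>e\<close> in the kernels of \<open>S\<close> and \<open>T\<close>.\<close>

lemma psd_square_eq_eigenvector_difference:
  assumes pS: "psd S" and pT: "psd T" and eq: "S ** S = T ** T"
    and De: "(S - T) *v e = of_real l *s e"
  shows "(S - T) *v e = 0"
proof -
  have Se: "S *v e = of_real l *s e + T *v e"
    using De by (simp add: matrix_vector_mult_diff_rdistrib algebra_simps)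
  have "cinner e (S *v (S *v e)) = cinner e (T *v (T *v e))"
    using eq by (simp add: matrix_vector_mul_assoc)
  moreover have "cinner e (S *v (S *v e)) = of_real l * qform S e + cinner e (S *v (T *v e))"
    by (simp add: Se matrix_vector_right_distrib matrix_vector_mult_scale cinner_add_right
        cinner_scale_right qform_def algebra_simps)
  moreover have "cinner e ((S - T) *v (T *v e)) = of_real l * qform T e"
    using cinner_adj[of e "S - T" "T *v e"] pS pT
    by (simp add: De cinner_scale_left qform_def adj_diff psd_iff_qform)
  ultimately have "of_real l * (qform S e + qform T e) = 0"
    by (simp add: matrix_vector_mult_diff_rdistrib cinner_diff_right algebra_simps)
  moreover have "Re (qform S e) = 0 \<and> Re (qform T e) = 0" if "qform S e + qform T e = 0"
  proof -
    have "Re (qform S e) + Re (qform T e) = 0"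
      using arg_cong[OF that, of Re] by simp
    moreover have "0 \<le> Re (qform S e)" "0 \<le> Re (qform T e)"
      using pS pT by (simp_all add: psd_iff_qform)
    ultimately show ?thesis
      by linarith
  qed
  ultimately have "l = 0 \<or> (S *v e = 0 \<and> T *v e = 0)"
    using psd_kernel pS pT by auto
  then show ?thesis
    using De by (auto simp: matrix_vector_mult_diff_rdistrib)
qed

lemma psd_sqrt_unique:
  assumes "psd S" "psd T" "S ** S = T ** T"
  shows "S = T"
proof -
  have "adj (S - T) = S - T"
    using assms by (simp add: adj_diff psd_iff_qform)
  then obtain E lam where E: "eigensystem (S - T) E lam"
    and complete: "\<forall>x. x = (\<Sum>e\<in>E. cinner e x *s e)"
    using hermitian_spectral by blast
  have "(S - T) *v e = 0" if "e \<in> E" for e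
    using E that psd_square_eq_eigenvector_difference[OF assms] by (simp add: eigensystem_def)
  then have "(S - T) *v x = 0" for x
    using matrix_vector_mult_expansion[OF complete, of "S - T" x] by simp
  then have "S - T = 0"
    by (simp add: matrix_eq)
  then show ?thesis
    by simp
qed

lemma psd_msqrt:
  assumes "psd A" shows "psd (msqrt A)" and "msqrt A ** msqrt A = A"
proof -
  have "\<exists>!S. psd S \<and> S ** S = A"
    using psd_sqrt_exists[OF assms] psd_sqrt_unique by blast
  then have "psd (msqrt A) \<and> msqrt A ** msqrt A = A"
    unfolding msqrt_def by (rule theI')
  then show "psd (msqrt A)" and "msqrt A ** msqrt A = A"
    by auto
qed

section \<open>Conjugating joint measurements and hidden-state models\<close>

lemma matrix_add_rdistrib: "(A + B) ** C = A ** C + B ** (C::'a::semiring_1^'p^'n)"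
  by (simp add: matrix_matrix_mult_def vec_eq_iff sum.distrib distrib_right)

lemma matrix_mult_sum_mult: "(X::complex^'n^'n) ** sum f L ** Y = (\<Sum>l\<in>L. X ** f l ** Y)"
  by (induction L rule: infinite_finite_induct) (auto simp: matrix_add_ldistrib matrix_add_rdistrib)

lemma matrix_mult_scaleR_mult: "(X::complex^'n^'n) ** (c *\<^sub>R A) ** Y = c *\<^sub>R (X ** A ** Y)"
  by (simp add: matrix_scalar_ac scalar_matrix_assoc)

lemma matrix_mult_add_mult: "(X::complex^'n^'n) ** (A + B) ** Y = X ** A ** Y + X ** B ** Y"
  by (simp add: matrix_add_ldistrib matrix_add_rdistrib)

lemma cond_prob_marginal:
  fixes X :: "nat \<Rightarrow> complex^'n^'n"
  assumes "cond_prob p m"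
  shows "(\<Sum>a\<in>UNIV. \<Sum>l<m. (c l * p a x l) *\<^sub>R X l) = (\<Sum>l<m. c l *\<^sub>R X l)"
proof -
  have "(\<Sum>a\<in>UNIV. \<Sum>l<m. (c l * p a x l) *\<^sub>R X l) = (\<Sum>l<m. (c l * (\<Sum>a\<in>UNIV. p a x l)) *\<^sub>R X l)"
    by (subst sum.swap) (simp add: scaleR_sum_left sum_distrib_left)
  also have "\<dots> = (\<Sum>l<m. c l *\<^sub>R X l)"
    using assms by (intro sum.cong) (auto simp: cond_prob_def)
  finally show ?thesis .
qed

lemma JM_intro:
  fixes I :: "'i set" and G :: "'i \<Rightarrow> complex^'n^'n" and p :: "'o::finite \<Rightarrow> 'x::finite \<Rightarrow> 'i \<Rightarrow> real"
  assumes "finite I" and "\<forall>i\<in>I. psd (G i)" and "(\<Sum>i\<in>I. G i) = mat 1"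
    and "\<forall>a x. \<forall>i\<in>I. 0 \<le> p a x i" and "\<forall>x. \<forall>i\<in>I. (\<Sum>a\<in>UNIV. p a x i) = 1"
    and "\<forall>a x. M a x = (\<Sum>i\<in>I. p a x i *\<^sub>R G i)"
  shows "JM M"
proof -
  obtain h where h: "bij_betw h {..<card I} I"
    using ex_bij_betw_nat_finite[OF \<open>finite I\<close>] by (auto simp: atLeast0LessThan)
  then have "h l \<in> I" if "l < card I" for l
    using that by (auto simp: bij_betw_def)
  moreover have "(\<Sum>l<card I. f (h l)) = (\<Sum>i\<in>I. f i)" for f :: "'i \<Rightarrow> complex^'n^'n"
    by (rule sum.reindex_bij_betw[OF h])
  then have "(\<Sum>l<card I. G (h l)) = mat 1"
    and "(\<Sum>l<card I. p a x (h l) *\<^sub>R G (h l)) = M a x" for a x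
    using assms by simp_all
  ultimately show ?thesis
    unfolding JM_def cond_prob_def using assms
    by (intro exI[of _ "card I"] exI[of _ "G \<circ> h"] exI[of _ "\<lambda>a x l. p a x (h l)"]) simp
qed

lemma JM_sum_eq_mat_1:
  assumes "JM D" shows "(\<Sum>a\<in>UNIV. D a x) = mat 1"
proof -
  obtain m G p where "(\<Sum>l<m. G l) = mat 1" and cp: "cond_prob p m"
    and "\<forall>a x. D a x = (\<Sum>l<m. p a x l *\<^sub>R G l)"
    using assms unfolding JM_def by blast
  then show ?thesis
    using cond_prob_marginal[OF cp, of "\<lambda>_. 1" x G] by simp
qed

lemma is_MA_sum_eq_mat_1: "is_MA B \<Longrightarrow> (\<Sum>a\<in>UNIV. B a x) = mat 1"
  by (simp add: is_MA_def is_POVM_def)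

text \<open>The hidden state for \<open>\<lambda>\<close> is the normalised \<open>X\<^sup>\<dagger> G\<^sub>\<lambda> X\<close>, weighted by its trace; hidden variables
  of zero weight get the (arbitrary) state \<open>X\<^sup>\<dagger> X\<close>.\<close>

lemma JM_congruence_LHS:
  assumes "JM D" and trace: "mtrace (adj X ** X) = 1"
  shows "LHS (\<lambda>a x. adj X ** D a x ** X)"
proof -
  obtain m G p where G: "\<forall>l<m. psd (G l)" "(\<Sum>l<m. G l) = mat 1" and cp: "cond_prob p m"
    and D: "\<forall>a x. D a x = (\<Sum>l<m. p a x l *\<^sub>R G l)"
    using \<open>JM D\<close> unfolding JM_def by blast
  define H where "H l = adj X ** G l ** X" for l
  have psd_H: "psd (H l)" if "l < m" for l
    using G(1) that by (simp add: H_def psd_congruence)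
  define q where "q l = Re (mtrace (H l))" for l
  have q_nonneg: "0 \<le> q l" and trace_H: "mtrace (H l) = of_real (q l)" if "l < m" for l
    using psd_mtrace[OF psd_H[OF that]] by (auto simp: q_def)
  define R where "R l = (if q l = 0 then adj X ** X else (1 / q l) *\<^sub>R H l)" for l
  have "density_op (R l)" if "l < m" for l
    using psd_congruence[OF psd_mat_1, of X] trace psd_H[OF that] trace_H[OF that] q_nonneg[OF that]
    by (auto simp: R_def density_op_def psd_scaleR mtrace_scaleR)
  moreover have "(q l * p a x l) *\<^sub>R R l = p a x l *\<^sub>R H l" if "l < m" for l a x
    using psd_mtrace_eq_0[OF psd_H[OF that]] trace_H[OF that] by (auto simp: R_def)
  moreover have "(\<Sum>l<m. q l) = 1"
  proof -
    have "(\<Sum>l<m. of_real (q l)) = (\<Sum>l<m. mtrace (H l))"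
      using trace_H by simp
    also have "\<dots> = mtrace (adj X ** (\<Sum>l<m. G l) ** X)"
      by (simp add: matrix_mult_sum_mult mtrace_sum H_def)
    finally have "(\<Sum>l<m. of_real (q l)) = mtrace (adj X ** (\<Sum>l<m. G l) ** X)" .
    then show ?thesis
      using G(2) trace by (metis of_real_eq_1_iff of_real_sum matrix_mul_rid)
  qed
  ultimately show ?thesis
    unfolding LHS_def using q_nonneg cp D
    by (intro exI[of _ m] exI[of _ q] exI[of _ p] exI[of _ R])
      (simp add: matrix_mult_sum_mult matrix_mult_scaleR_mult H_def)
qed

lemma LHS_congruence_JM:
  assumes "LHS \<tau>" and reduced: "\<forall>x. (\<Sum>a\<in>UNIV. \<tau> a x) = \<rho>" and normal: "adj T ** \<rho> ** T = mat 1"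
  shows "JM (\<lambda>a x. adj T ** \<tau> a x ** T)"
proof -
  obtain m q p R where q: "\<forall>l<m. 0 \<le> q l" and cp: "cond_prob p m"
    and R: "\<forall>l<m. density_op (R l)" and \<tau>: "\<forall>a x. \<tau> a x = (\<Sum>l<m. (q l * p a x l) *\<^sub>R R l)"
    using \<open>LHS \<tau>\<close> unfolding LHS_def by blast
  define G where "G l = q l *\<^sub>R (adj T ** R l ** T)" for l
  have "psd (G l)" if "l < m" for l
    using q R that by (simp add: G_def density_op_def psd_scaleR psd_congruence)
  moreover have "(\<Sum>l<m. G l) = mat 1"
  proof -
    have "(\<Sum>l<m. q l *\<^sub>R R l) = \<rho>"
      using reduced \<tau> cond_prob_marginal[OF cp, of q undefined R] by simp
    moreover have "(\<Sum>l<m. G l) = adj T ** (\<Sum>l<m. q l *\<^sub>R R l) ** T"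
      by (simp add: G_def matrix_mult_sum_mult matrix_mult_scaleR_mult)
    ultimately show ?thesis
      using normal by simp
  qed
  ultimately show ?thesis
    unfolding JM_def using cp \<tau>
    by (intro exI[of _ m] exI[of _ G] exI[of _ p])
      (simp add: G_def matrix_mult_sum_mult matrix_mult_scaleR_mult mult.commute)
qed

section \<open>Robustness\<close>

definition IR_feasible :: "('o::finite \<Rightarrow> 'x::finite \<Rightarrow> complex^'n^'n) \<Rightarrow> real set" where
  "IR_feasible M = {t. 0 \<le> t \<and> (\<exists>D' D. JM D' \<and> JM D \<and>
      (\<forall>a x. (1 / (1 + t)) *\<^sub>R (M a x + t *\<^sub>R D' a x) = D a x))}"

definition SR_feasible :: "('o::finite \<Rightarrow> 'x::finite \<Rightarrow> complex^'n^'n) \<Rightarrow> real set" where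
  "SR_feasible \<sigma> = {t. 0 \<le> t \<and> (\<exists>\<tau>' \<tau>. LHS \<tau>' \<and> LHS \<tau> \<and>
      (\<forall>x. (\<Sum>a\<in>UNIV. \<tau>' a x) = (\<Sum>a\<in>UNIV. \<sigma> a x)) \<and>
      (\<forall>x. (\<Sum>a\<in>UNIV. \<tau> a x) = (\<Sum>a\<in>UNIV. \<sigma> a x)) \<and>
      (\<forall>a x. (1 / (1 + t)) *\<^sub>R (\<sigma> a x + t *\<^sub>R \<tau>' a x) = \<tau> a x))}"

lemma IR_JM_eq_Inf: "IR_JM M = Inf (IR_feasible M)"
  by (simp add: IR_JM_def IR_feasible_def)

lemma SR_CLHS_eq_Inf: "SR_CLHS \<sigma> = Inf (SR_feasible \<sigma>)"
  by (simp add: SR_CLHS_def SR_feasible_def)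

lemma IR_feasible_subset_SR_feasible:
  fixes B :: "'o::finite \<Rightarrow> 'x::finite \<Rightarrow> complex^'n^'n" and X :: "complex^'n^'n"
  assumes MA: "is_MA B" and trace: "mtrace (adj X ** X) = 1"
  shows "IR_feasible B \<subseteq> SR_feasible (\<lambda>a x. adj X ** B a x ** X)"
proof
  fix t assume "t \<in> IR_feasible B"
  then obtain D' D where "0 \<le> t" and J: "JM D'" "JM D"
    and mix: "\<forall>a x. (1 / (1 + t)) *\<^sub>R (B a x + t *\<^sub>R D' a x) = D a x"
    unfolding IR_feasible_def by blast
  have reduced: "(\<Sum>a\<in>UNIV. adj X ** M a x ** X) = adj X ** X"
    if "(\<Sum>a\<in>UNIV. M a x) = mat 1" for M :: "'o \<Rightarrow> 'x \<Rightarrow> complex^'n^'n" and x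
    using that by (simp flip: matrix_mult_sum_mult)
  have "(\<Sum>a\<in>UNIV. adj X ** D' a x ** X) = (\<Sum>a\<in>UNIV. adj X ** B a x ** X)" for x
    using reduced J(1) MA by (simp add: JM_sum_eq_mat_1 is_MA_sum_eq_mat_1)
  moreover have "(\<Sum>a\<in>UNIV. adj X ** D a x ** X) = (\<Sum>a\<in>UNIV. adj X ** B a x ** X)" for x
    using reduced J(2) MA by (simp add: JM_sum_eq_mat_1 is_MA_sum_eq_mat_1)
  moreover have "(1 / (1 + t)) *\<^sub>R (adj X ** B a x ** X + t *\<^sub>R (adj X ** D' a x ** X))
      = adj X ** D a x ** X" for a x
    using arg_cong[OF mix[rule_format, of a x], of "\<lambda>Y. adj X ** Y ** X"]
    by (simp add: matrix_mult_add_mult matrix_mult_scaleR_mult)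
  ultimately show "t \<in> SR_feasible (\<lambda>a x. adj X ** B a x ** X)"
    unfolding SR_feasible_def using \<open>0 \<le> t\<close> JM_congruence_LHS[OF _ trace] J by blast
qed

lemma SR_feasible_subset_IR_feasible:
  assumes MA: "is_MA B" and "invertible X"
  shows "SR_feasible (\<lambda>a x. adj X ** B a x ** X) \<subseteq> IR_feasible B"
proof
  obtain T where XT: "X ** T = mat 1" and TX: "T ** X = mat 1"
    using \<open>invertible X\<close> by (auto simp: invertible_def)
  have TX_adj: "adj T ** adj X = mat 1"
    using XT by (metis adj_mult adj_mat_1)
  have undo: "adj T ** (adj X ** Y ** X) ** T = Y" for Y
    by (simp add: matrix_mul_assoc TX_adj) (simp flip: matrix_mul_assoc add: XT)
  fix t assume "t \<in> SR_feasible (\<lambda>a x. adj X ** B a x ** X)"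
  then obtain \<tau>' \<tau> where "0 \<le> t" and L: "LHS \<tau>'" "LHS \<tau>"
    and "\<forall>x. (\<Sum>a\<in>UNIV. \<tau>' a x) = (\<Sum>a\<in>UNIV. adj X ** B a x ** X)"
    and "\<forall>x. (\<Sum>a\<in>UNIV. \<tau> a x) = (\<Sum>a\<in>UNIV. adj X ** B a x ** X)"
    and mix: "\<forall>a x. (1 / (1 + t)) *\<^sub>R (adj X ** B a x ** X + t *\<^sub>R \<tau>' a x) = \<tau> a x"
    unfolding SR_feasible_def by blast
  moreover have "(\<Sum>a\<in>UNIV. adj X ** B a x ** X) = adj X ** X" for x
    using MA by (simp add: is_MA_sum_eq_mat_1 flip: matrix_mult_sum_mult)
  ultimately have "JM (\<lambda>a x. adj T ** \<tau>' a x ** T)" "JM (\<lambda>a x. adj T ** \<tau> a x ** T)"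
    using LHS_congruence_JM[of _ "adj X ** X" T] undo[of "mat 1"] by simp_all
  moreover have "(1 / (1 + t)) *\<^sub>R (B a x + t *\<^sub>R (adj T ** \<tau>' a x ** T)) = adj T ** \<tau> a x ** T"
    for a x
    using arg_cong[OF mix[rule_format, of a x], of "\<lambda>Y. adj T ** Y ** T"]
    by (simp add: matrix_mult_add_mult matrix_mult_scaleR_mult undo)
  ultimately show "t \<in> IR_feasible B"
    unfolding IR_feasible_def using \<open>0 \<le> t\<close> by blast
qed

lemma JM_trivial:
  assumes "\<forall>a. 0 \<le> P a" and "(\<Sum>a\<in>UNIV. P a) = 1"
  shows "JM (\<lambda>a x. P a *\<^sub>R mat 1)"
  using assms by (intro JM_intro[where I = "{()}" and G = "\<lambda>_. mat 1" and p = "\<lambda>a x _. P a"])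
    (auto simp: psd_mat_1)

text \<open>Joint measurement of \<open>B\<close> mixed with white noise: draw an input \<open>y\<close> uniformly, measure
  \<open>B\<^sub>y\<close>, and report its outcome if \<open>y = x\<close>, a uniformly random outcome otherwise.\<close>

lemma JM_uniform_input_simulation:
  fixes B :: "'o::finite \<Rightarrow> 'x::finite \<Rightarrow> complex^'n^'n"
  defines "K \<equiv> real CARD('x)" and "N \<equiv> real CARD('o)"
  assumes MA: "is_MA B"
  shows "JM (\<lambda>a x. (1 / K) *\<^sub>R (B a x + ((K - 1) / N) *\<^sub>R mat 1))"
proof -
  have "K > 0" "N > 0"
    by (simp_all add: K_def N_def)
  define G where "G = (\<lambda>(y, b). (1 / K) *\<^sub>R B b y)"
  define p where "p a x = (\<lambda>(y, b). if y = x then (if a = b then 1 else 0) else 1 / N)"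
    for a :: 'o and x :: 'x
  have "(\<Sum>i\<in>UNIV. p a x i *\<^sub>R G i) = (1 / K) *\<^sub>R (B a x + ((K - 1) / N) *\<^sub>R mat 1)" for a x
  proof -
    define f where "f y = (\<Sum>b\<in>UNIV. p a x (y, b) *\<^sub>R G (y, b))" for y
    have "p a x (x, b) *\<^sub>R G (x, b) = (if a = b then (1 / K) *\<^sub>R B b x else 0)" for b
      by (simp add: p_def G_def)
    then have "f x = (1 / K) *\<^sub>R B a x"
      by (simp add: f_def)
    moreover have "f y = (1 / (N * K)) *\<^sub>R mat 1" if "y \<noteq> x" for y
      using that MA by (simp add: f_def p_def G_def is_MA_sum_eq_mat_1 flip: scaleR_sum_right)
    ultimately have "(\<Sum>y\<in>UNIV. f y) = (1 / K) *\<^sub>R B a x + (K - 1) *\<^sub>R (1 / (N * K)) *\<^sub>R mat 1"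
      by (simp add: sum.remove[of UNIV x] sum_constant_scaleR card_Diff_singleton K_def of_nat_diff
          del: sum_constant)
    then show ?thesis
      using \<open>K > 0\<close> by (simp add: f_def sum.cartesian_product' scaleR_add_right
          flip: UNIV_Times_UNIV)
  qed
  moreover have "(\<Sum>i\<in>UNIV. G i) = mat 1"
    using MA \<open>K > 0\<close>
    by (simp add: G_def sum.cartesian_product' is_MA_sum_eq_mat_1 K_def sum_constant_scaleR
        del: sum_constant flip: UNIV_Times_UNIV scaleR_sum_right)
  moreover have "(\<Sum>a\<in>UNIV. p a x i) = 1" for x i
    using \<open>N > 0\<close> by (cases "fst i = x") (simp_all add: p_def split_beta N_def)
  ultimately show ?thesis
    using MA \<open>K > 0\<close> \<open>N > 0\<close>
    by (intro JM_intro[where I = UNIV and G = G and p = p])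
      (auto simp: G_def p_def psd_scaleR is_MA_def is_POVM_def)
qed

text \<open>This is the standard bound \<open>IR \<le> |inputs| - 1\<close>; it ensures that the feasible sets
  are nonempty, so that their infima are meaningful.\<close>

lemma card_inputs_minus_one_IR_feasible:
  fixes B :: "'o::finite \<Rightarrow> 'x::finite \<Rightarrow> complex^'n^'n"
  assumes "is_MA B"
  shows "real CARD('x) - 1 \<in> IR_feasible B"
proof -
  define K where "K = real CARD('x)"
  define N where "N = real CARD('o)"
  define D' where "D' = (\<lambda>(a::'o) (x::'x). (1 / N) *\<^sub>R (mat 1 :: complex^'n^'n))"
  define D where "D = (\<lambda>a x. (1 / K) *\<^sub>R (B a x + ((K - 1) / N) *\<^sub>R mat 1))"
  have "JM D'"
    unfolding D'_def by (rule JM_trivial) (simp_all add: N_def)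
  moreover have "JM D"
    unfolding D_def K_def N_def using assms by (rule JM_uniform_input_simulation)
  moreover have "(1 / (1 + (K - 1))) *\<^sub>R (B a x + (K - 1) *\<^sub>R D' a x) = D a x" for a x
    by (simp add: D_def D'_def)
  moreover have "0 \<le> K - 1"
    by (simp add: K_def Suc_le_eq)
  ultimately show ?thesis
    unfolding IR_feasible_def K_def[symmetric] by blast
qed

lemma SR_CLHS_congruence_le_IR_JM:
  fixes B :: "'o::finite \<Rightarrow> 'x::finite \<Rightarrow> complex^'n^'n" and X :: "complex^'n^'n"
  assumes "is_MA B" and "mtrace (adj X ** X) = 1"
  shows "SR_CLHS (\<lambda>a x. adj X ** B a x ** X) \<le> IR_JM B"
proof -
  have "bdd_below (SR_feasible (\<lambda>a x. adj X ** B a x ** X))"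
    by (auto simp: bdd_below_def SR_feasible_def)
  then show ?thesis
    unfolding IR_JM_eq_Inf SR_CLHS_eq_Inf
    using card_inputs_minus_one_IR_feasible IR_feasible_subset_SR_feasible assms
    by (intro cInf_superset_mono) blast+
qed

lemma SR_CLHS_congruence_eq_IR_JM:
  fixes B :: "'o::finite \<Rightarrow> 'x::finite \<Rightarrow> complex^'n^'n" and X :: "complex^'n^'n"
  assumes "is_MA B" and "mtrace (adj X ** X) = 1" and "invertible X"
  shows "SR_CLHS (\<lambda>a x. adj X ** B a x ** X) = IR_JM B"
  using IR_feasible_subset_SR_feasible[OF assms(1,2)] SR_feasible_subset_IR_feasible[OF assms(1,3)]
  by (simp add: IR_JM_eq_Inf SR_CLHS_eq_Inf subset_antisym)

lemma sandwich_eq_congruence: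
  assumes "density_op \<rho>"
  shows "sandwich \<rho> B = (\<lambda>a x. adj (msqrt \<rho>) ** B a x ** msqrt \<rho>)"
    and "mtrace (adj (msqrt \<rho>) ** msqrt \<rho>) = 1"
  using assms psd_msqrt[of \<rho>] by (auto simp: density_op_def psd_iff_qform sandwich_def)

lemma invertible_msqrt:
  assumes "psd \<rho>" and "invertible \<rho>" shows "invertible (msqrt \<rho>)"
proof -
  obtain P where "\<rho> ** P = mat 1"
    using \<open>invertible \<rho>\<close> invertible_right_inverse by blast
  then have "msqrt \<rho> ** (msqrt \<rho> ** P) = mat 1"
    using psd_msqrt(2)[OF \<open>psd \<rho>\<close>] by (simp add: matrix_mul_assoc)
  then show ?thesis
    using invertible_right_inverse by blast
qed

lemma density_op_maximally_mixed: "density_op ((1 / real CARD('n)) *\<^sub>R mat 1 :: complex^'n^'n)"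
  by (simp add: density_op_def psd_scaleR psd_mat_1 mtrace_scaleR mtrace_mat_1)

lemma invertible_maximally_mixed: "invertible ((1 / real CARD('n)) *\<^sub>R mat 1 :: complex^'n^'n)"
proof -
  have "invertible (mat 1 :: complex^'n^'n)"
    by (auto simp: invertible_def)
  then show ?thesis
    by (simp add: scalar_invertible)
qed

theorem lemma1:
  fixes B :: "'o::finite \<Rightarrow> 'x::finite \<Rightarrow> complex^'n^'n"
  assumes "is_MA B"
  shows "IR_JM B \<in> (\<lambda>\<rho>. SR_CLHS (sandwich \<rho> B)) ` {\<rho>. density_op \<rho>}
       \<and> (\<forall>\<rho>. density_op \<rho> \<longrightarrow> SR_CLHS (sandwich \<rho> B) \<le> IR_JM B)
       \<and> (\<forall>\<rho>. density_op \<rho> \<and> invertible \<rho> \<longrightarrow> SR_CLHS (sandwich \<rho> B) = IR_JM B)"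
proof -
  have full_rank: "SR_CLHS (sandwich \<rho> B) = IR_JM B" if "density_op \<rho>" "invertible \<rho>" for \<rho>
    using that SR_CLHS_congruence_eq_IR_JM[OF assms] invertible_msqrt[of \<rho>]
    by (simp add: sandwich_eq_congruence density_op_def)
  have "SR_CLHS (sandwich \<rho> B) \<le> IR_JM B" if "density_op \<rho>" for \<rho>
    using that SR_CLHS_congruence_le_IR_JM[OF assms] by (simp add: sandwich_eq_congruence)
  moreover have "IR_JM B \<in> (\<lambda>\<rho>. SR_CLHS (sandwich \<rho> B)) ` {\<rho>. density_op \<rho>}"
    using full_rank[OF density_op_maximally_mixed invertible_maximally_mixed]
      density_op_maximally_mixed by (metis image_eqI mem_Collect_eq)
  ultimately show ?thesis
    using full_rank by blast
qed

end
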